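(* Let $P=\forall x_1,\dots,x_n\,\exists y_1(D_1),\dots,y_k(D_k)$ be a prefix, let $G_{\mathrm{syn}}$ be an admissible group w.r.t. $P$, and let $G_{\mathrm{sem}}$ be its associated group. Let $\sigma\in\mathcal A(X)$, $f\in G_{\mathrm{sem}}$, $s\in\mathcal S(P)$ and $i\in\{1,\dots,k\}$ be such that (1) for all $j\in\{1,\dots,k\}$ with $j<i$ or $D_i\not\subseteq D_j$, we have $[y_j]_{\tau_s}=[y_j]_{\tau_{f(s)}}$ for all $\tau\in\mathcal A(X)$ with $\tau|_{D_i}=\sigma|_{D_i}$; (2) for all $g\in G_{\mathrm{syn}}$ and all $\tau\in\mathcal A(X)$, if $\tau|_{D_i}=\sigma|_{D_i}$ then $g(\tau)|_{D_i}=\tau|_{D_i}$. Then there exists an interpretation $s'\in\mathcal S(P)$ such that for every $j\in\{1,\dots,k\}$ and every $\tau\in\mathcal A(X)$: $[y_j]_{\tau_{s'}}=[y_j]_{\tau_s}$ if $j<i$, or if $j\ge i$ and $\tau|_{D_i}\neq\sigma|_{D_i}$; and $[y_j]_{\tau_{s'}}=[y_j]_{\tau_{f(s)}}$ if $j\ge i$ and $\tau|_{D_i}=\sigma|_{D_i}$. Furthermore, there exists $h\in G_{\mathrm{sem}}$ with $h(s)=s'$.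
   Context: $X=\{x_1,\dots,x_n\}$, $Y=\{y_1,\dots,y_k\}$ are finite disjoint sets of propositional variables; $\operatorname{BF}(V)$ the propositional formulas over $V\subseteq X\cup Y$; $\mathcal A(V)$ the assignments $V\to\{\top,\bot\}$; $[\phi]_\sigma$ the truth value; $D_j\subseteq X$. For $\rho\in\mathcal A(X)$ and $D\subseteq X$, $\rho|_D$ is the restriction of $\rho$ to $D$. An interpretation is $s=(s_1,\dots,s_k)$ with $s_j:\{\top,\bot\}^{|D_j|}\to\{\top,\bot\}$; $\mathcal S(P)$ the set of interpretations. For $\tau\in\mathcal A(X)$, $\tau_s\in\mathcal A(X\cup Y)$ equals $\tau$ on $X$ and $\tau_s(y_j)=s_j$ evaluated at $\tau$'s values on $D_j$. For $g:\operatorname{BF}(V)\to\operatorname{BF}(V)$ and $\rho\in\mathcal A(V)$, $g(\rho)(v)=[g(v)]_\rho$; $g$ preserves propositional satisfiability if $[g(\phi)]_\rho=[\phi]_{g(\rho)}$ always. A formula in $\operatorname{BF}(Y)$ depends on $x_i$ if it contains some $y_j$ with $x_i\in D_j$. A bijection $g$ of $\operatorname{BF}(X\cup Y)$ is admissible w.r.t. $P$ if it preserves propositional satisfiability, $g(x_i)\in\operatorname{BF}(X)$, $g(y_j)\in\operatorname{BF}(Y)$, and if $g(y_j)$ depends on $x_i$ then $g^{-1}(x_i)\in\operatorname{BF}(D_j)$. An admissible group is a subgroup of all admissible functions. For admissible $g$ and $\tau\in\mathcal A(X)$, $g(\tau)\in\mathcal A(X)$ is $g(\tau)(x)=[g(x)]_\tau$.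 The associated group of $G_{\mathrm{syn}}$ is the set of all bijections $f:\mathcal S(P)\to\mathcal S(P)$ such that for every $s\in\mathcal S(P)$ and $\tau\in\mathcal A(X)$ there exists $g\in G_{\mathrm{syn}}$ with $g(\tau)_{f(s)}=g(\tau_s)$. *)

theory Defs
  imports "HOL-Algebra.Bij"
begin

(* Variables: XV i is x_i (1 <= i <= n), YV j is y_j (1 <= j <= k). *)
datatype var = XV nat | YV nat

datatype form = Const bool | Var var | Neg form | Conj form form | Disj form form

primrec vars :: "form \<Rightarrow> var set" where
  "vars (Const b) = {}"
| "vars (Var v) = {v}"
| "vars (Neg p) = vars p"
| "vars (Conj p q) = vars p \<union> vars q"
| "vars (Disj p q) = vars p \<union> vars q"

primrec eval :: "form \<Rightarrow> (var \<Rightarrow> bool) \<Rightarrow> bool" where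
  "eval (Const b) \<rho> = b"
| "eval (Var v) \<rho> = \<rho> v"
| "eval (Neg p) \<rho> = (\<not> eval p \<rho>)"
| "eval (Conj p q) \<rho> = (eval p \<rho> \<and> eval q \<rho>)"
| "eval (Disj p q) \<rho> = (eval p \<rho> \<or> eval q \<rho>)"

definition BF :: "var set \<Rightarrow> form set" where
  "BF V = {\<phi>. vars \<phi> \<subseteq> V}"

definition Xs :: "nat \<Rightarrow> var set" where "Xs n = XV ` {1..n}"
definition Ys :: "nat \<Rightarrow> var set" where "Ys k = YV ` {1..k}"
definition Vs :: "nat \<Rightarrow> nat \<Rightarrow> var set" where "Vs n k = Xs n \<union> Ys k"

(* A(V): assignments V -> bool, represented canonically (False outside V) *)
definition assignV :: "var set \<Rightarrow> (var \<Rightarrow> bool) set" where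
  "assignV V = {\<rho>. \<forall>v. v \<notin> V \<longrightarrow> \<rho> v = False}"

(* A(X): assignments to x_1..x_n, as functions on indices, False outside {1..n} *)
definition assignX :: "nat \<Rightarrow> (nat \<Rightarrow> bool) set" where
  "assignX n = {\<tau>. \<forall>i. i \<notin> {1..n} \<longrightarrow> \<tau> i = False}"

definition agree :: "nat set \<Rightarrow> (nat \<Rightarrow> bool) \<Rightarrow> (nat \<Rightarrow> bool) \<Rightarrow> bool" where
  "agree D \<tau> \<sigma> \<longleftrightarrow> (\<forall>x\<in>D. \<tau> x = \<sigma> x)"

(* prefix  forall x_1..x_n exists y_1(D_1)..y_k(D_k): D_j are index sets of x-variables *)
definition prefix :: "nat \<Rightarrow> nat \<Rightarrow> (nat \<Rightarrow> nat set) \<Rightarrow> bool" where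
  "prefix n k D \<longleftrightarrow> (\<forall>j\<in>{1..k}. D j \<subseteq> {1..n})"

(* S(P): s j is a Boolean function of the values of the variables in D j
   (represented as a function of the whole X-assignment depending only on D j);
   canonically constant False for indices outside {1..k}. *)
definition interps :: "nat \<Rightarrow> (nat \<Rightarrow> nat set) \<Rightarrow> (nat \<Rightarrow> (nat \<Rightarrow> bool) \<Rightarrow> bool) set" where
  "interps k D = {s. \<forall>j. (j \<in> {1..k} \<longrightarrow> (\<forall>a b. agree (D j) a b \<longrightarrow> s j a = s j b))
                        \<and> (j \<notin> {1..k} \<longrightarrow> s j = (\<lambda>_. False))}"

(* tau_s in A(X \<union> Y) *)
definition ext :: "nat \<Rightarrow> (nat \<Rightarrow> (nat \<Rightarrow> bool) \<Rightarrow> bool) \<Rightarrow> (nat \<Rightarrow> bool) \<Rightarrow> var \<Rightarrow> bool" where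
  "ext k s \<tau> = (\<lambda>v. case v of XV i \<Rightarrow> \<tau> i | YV j \<Rightarrow> (if j \<in> {1..k} then s j \<tau> else False))"

(* tau in A(X) viewed as an assignment on var (y's False); only used on BF(X) *)
definition xasg :: "(nat \<Rightarrow> bool) \<Rightarrow> var \<Rightarrow> bool" where
  "xasg \<tau> = (\<lambda>v. case v of XV i \<Rightarrow> \<tau> i | YV _ \<Rightarrow> False)"

definition act_asg :: "var set \<Rightarrow> (form \<Rightarrow> form) \<Rightarrow> (var \<Rightarrow> bool) \<Rightarrow> var \<Rightarrow> bool" where
  "act_asg V g \<rho> = (\<lambda>v. if v \<in> V then eval (g (Var v)) \<rho> else False)"

definition act_asgX :: "nat \<Rightarrow> (form \<Rightarrow> form) \<Rightarrow> (nat \<Rightarrow> bool) \<Rightarrow> nat \<Rightarrow> bool" where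
  "act_asgX n g \<tau> = (\<lambda>i. if i \<in> {1..n} then eval (g (Var (XV i))) (xasg \<tau>) else False)"

definition depends :: "(nat \<Rightarrow> nat set) \<Rightarrow> form \<Rightarrow> nat \<Rightarrow> bool" where
  "depends D \<phi> i \<longleftrightarrow> (\<exists>l. YV l \<in> vars \<phi> \<and> i \<in> D l)"

definition admissible :: "nat \<Rightarrow> nat \<Rightarrow> (nat \<Rightarrow> nat set) \<Rightarrow> (form \<Rightarrow> form) \<Rightarrow> bool" where
  "admissible n k D g \<longleftrightarrow>
     bij_betw g (BF (Vs n k)) (BF (Vs n k))
   \<and> (\<forall>\<phi>\<in>BF (Vs n k). \<forall>\<rho>\<in>assignV (Vs n k). eval (g \<phi>) \<rho> = eval \<phi> (act_asg (Vs n k) g \<rho>))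
   \<and> (\<forall>i\<in>{1..n}. g (Var (XV i)) \<in> BF (Xs n))
   \<and> (\<forall>j\<in>{1..k}. g (Var (YV j)) \<in> BF (Ys k))
   \<and> (\<forall>j\<in>{1..k}. \<forall>i\<in>{1..n}. depends D (g (Var (YV j))) i \<longrightarrow>
          inv_into (BF (Vs n k)) g (Var (XV i)) \<in> BF (XV ` D j))"

definition admissible_group :: "nat \<Rightarrow> nat \<Rightarrow> (nat \<Rightarrow> nat set) \<Rightarrow> (form \<Rightarrow> form) set \<Rightarrow> bool" where
  "admissible_group n k D G \<longleftrightarrow>
     subgroup G (BijGroup (BF (Vs n k))) \<and> (\<forall>g\<in>G. admissible n k D g)"

definition assoc_group :: "nat \<Rightarrow> nat \<Rightarrow> (nat \<Rightarrow> nat set) \<Rightarrow> (form \<Rightarrow> form) set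
     \<Rightarrow> ((nat \<Rightarrow> (nat \<Rightarrow> bool) \<Rightarrow> bool) \<Rightarrow> (nat \<Rightarrow> (nat \<Rightarrow> bool) \<Rightarrow> bool)) set" where
  "assoc_group n k D G = {f. f \<in> Bij (interps k D) \<and>
     (\<forall>s\<in>interps k D. \<forall>\<tau>\<in>assignX n. \<exists>g\<in>G.
        ext k (f s) (act_asgX n g \<tau>) = act_asg (Vs n k) g (ext k s \<tau>))}"

end

theory Submission
  imports Defs
begin

(* Splicing f(s) into s on the block of assignments that agree with \<sigma> on D_i (for those y_j
   that can see D_i) yields s'. Every g in G_syn fixes this block by (2), so the group
   elements that witness s \<mapsto> f(s) on the block also witness s \<mapsto> s', while the
   identity witnesses it off the block; symmetrically s' \<mapsto> s is witnessed as soon as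
   f(s) \<mapsto> s is. The latter holds because "related by G_syn assignment-wise" is reflexive
   and transitive and f has finite order on the finite set S(P). The transposition of s and
   s' therefore lies in G_sem. *)

type_synonym interp = "nat \<Rightarrow> (nat \<Rightarrow> bool) \<Rightarrow> bool"

definition sem_related :: "nat \<Rightarrow> nat \<Rightarrow> (form \<Rightarrow> form) set \<Rightarrow> interp \<Rightarrow> interp \<Rightarrow> bool" where
  "sem_related n k G t u \<longleftrightarrow>
     (\<forall>\<tau>\<in>assignX n. \<exists>g\<in>G. ext k u (act_asgX n g \<tau>) = act_asg (Vs n k) g (ext k t \<tau>))"

lemma assoc_group_iff:
  "h \<in> assoc_group n k D G \<longleftrightarrow>
     h \<in> Bij (interps k D) \<and> (\<forall>t\<in>interps k D. sem_related n k G t (h t))"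
  by (auto simp: assoc_group_def sem_related_def)

lemma eval_cong: "(\<And>v. v \<in> vars \<phi> \<Longrightarrow> \<rho> v = \<rho>' v) \<Longrightarrow> eval \<phi> \<rho> = eval \<phi> \<rho>'"
  by (induction \<phi>) auto

lemma ext_in_assignV: "\<tau> \<in> assignX n \<Longrightarrow> ext k t \<tau> \<in> assignV (Vs n k)"
  unfolding assignV_def assignX_def ext_def Vs_def Xs_def Ys_def
  by (fastforce split: var.splits)

lemma act_asgX_in_assignX: "act_asgX n g \<tau> \<in> assignX n"
  unfolding act_asgX_def assignX_def by auto

lemma act_asgX_eq_act_asg_ext:
  assumes "admissible n k D g"
  shows "act_asgX n g \<tau> = (\<lambda>i. act_asg (Vs n k) g (ext k t \<tau>) (XV i))"
proof
  fix i
  show "act_asgX n g \<tau> i = act_asg (Vs n k) g (ext k t \<tau>) (XV i)"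
  proof (cases "i \<in> {1..n}")
    case True
    then have "vars (g (Var (XV i))) \<subseteq> Xs n"
      using assms unfolding admissible_def BF_def by auto
    then have "eval (g (Var (XV i))) (xasg \<tau>) = eval (g (Var (XV i))) (ext k t \<tau>)"
      by (intro eval_cong) (auto simp: Xs_def xasg_def ext_def)
    then show ?thesis
      using True by (simp add: act_asgX_def act_asg_def Vs_def Xs_def)
  next
    case False
    then have "XV i \<notin> Vs n k" by (auto simp: Vs_def Xs_def Ys_def)
    with False show ?thesis by (auto simp: act_asgX_def act_asg_def)
  qed
qed

lemma act_asg_compose:
  assumes "admissible n k D g1" "admissible n k D g2" "\<rho> \<in> assignV (Vs n k)"
  shows "act_asg (Vs n k) (compose (BF (Vs n k)) g1 g2) \<rho>
           = act_asg (Vs n k) g2 (act_asg (Vs n k) g1 \<rho>)"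
proof
  fix v
  show "act_asg (Vs n k) (compose (BF (Vs n k)) g1 g2) \<rho> v
          = act_asg (Vs n k) g2 (act_asg (Vs n k) g1 \<rho>) v"
  proof (cases "v \<in> Vs n k")
    case True
    then have v: "Var v \<in> BF (Vs n k)" by (simp add: BF_def)
    then have "g2 (Var v) \<in> BF (Vs n k)"
      using assms(2) unfolding admissible_def bij_betw_def by auto
    then have "eval (g1 (g2 (Var v))) \<rho> = eval (g2 (Var v)) (act_asg (Vs n k) g1 \<rho>)"
      using assms(1,3) unfolding admissible_def by blast
    then show ?thesis using True v by (simp add: act_asg_def compose_def)
  qed (simp add: act_asg_def)
qed

lemma admissible_group_id: "admissible_group n k D G \<Longrightarrow> (\<lambda>x\<in>BF (Vs n k). x) \<in> G"
  using subgroup.one_closed by (fastforce simp: admissible_group_def BijGroup_def)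

lemma admissible_group_compose:
  assumes "admissible_group n k D G" "g1 \<in> G" "g2 \<in> G"
  shows "compose (BF (Vs n k)) g1 g2 \<in> G"
proof -
  have sg: "subgroup G (BijGroup (BF (Vs n k)))"
    using assms(1) by (simp add: admissible_group_def)
  then have "g1 \<otimes>\<^bsub>BijGroup (BF (Vs n k))\<^esub> g2 \<in> G"
    using assms(2,3) by (rule subgroup.m_closed)
  moreover have "g1 \<in> Bij (BF (Vs n k))" "g2 \<in> Bij (BF (Vs n k))"
    using sg assms(2,3) subgroup.mem_carrier by (fastforce simp: BijGroup_def)+
  ultimately show ?thesis by (simp add: BijGroup_def)
qed

lemma related_at_by_id:
  assumes "admissible_group n k D G" "\<tau> \<in> assignX n" "ext k u \<tau> = ext k t \<tau>"
  shows "\<exists>g\<in>G. ext k u (act_asgX n g \<tau>) = act_asg (Vs n k) g (ext k t \<tau>)"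
proof
  let ?id = "\<lambda>x\<in>BF (Vs n k). x"
  show "?id \<in> G" using assms(1) by (rule admissible_group_id)
  have "act_asgX n ?id \<tau> = \<tau>"
    using assms(2) by (auto simp: act_asgX_def assignX_def BF_def Vs_def Xs_def xasg_def)
  moreover have "act_asg (Vs n k) ?id \<rho> = \<rho>" if "\<rho> \<in> assignV (Vs n k)" for \<rho>
    using that by (auto simp: act_asg_def assignV_def BF_def)
  ultimately show "ext k u (act_asgX n ?id \<tau>) = act_asg (Vs n k) ?id (ext k t \<tau>)"
    using assms(2,3) ext_in_assignV by metis
qed

lemma sem_related_refl: "admissible_group n k D G \<Longrightarrow> sem_related n k G t t"
  by (simp add: sem_related_def related_at_by_id)

lemma sem_related_trans:
  assumes G: "admissible_group n k D G"
    and "sem_related n k G t u" "sem_related n k G u w"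
  shows "sem_related n k G t w"
  unfolding sem_related_def
proof
  fix \<tau> assume \<tau>: "\<tau> \<in> assignX n"
  obtain g1 where g1: "g1 \<in> G" "ext k u (act_asgX n g1 \<tau>) = act_asg (Vs n k) g1 (ext k t \<tau>)"
    using assms(2) \<tau> unfolding sem_related_def by blast
  define \<tau>1 where "\<tau>1 = act_asgX n g1 \<tau>"
  obtain g2 where g2: "g2 \<in> G" "ext k w (act_asgX n g2 \<tau>1) = act_asg (Vs n k) g2 (ext k u \<tau>1)"
    using assms(3) act_asgX_in_assignX unfolding sem_related_def \<tau>1_def by blast
  define g where "g = compose (BF (Vs n k)) g1 g2"
  have "g \<in> G" using G g1(1) g2(1) by (simp add: g_def admissible_group_compose)
  have adm: "admissible n k D g1" "admissible n k D g2" "admissible n k D g"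
    using G g1(1) g2(1) \<open>g \<in> G\<close> by (auto simp: admissible_group_def)
  have g_ext: "act_asg (Vs n k) g (ext k t \<tau>) = ext k w (act_asgX n g2 \<tau>1)"
    using act_asg_compose[OF adm(1,2) ext_in_assignV[OF \<tau>]] g1(2) g2(2)
    by (simp add: g_def \<tau>1_def)
  \<comment> \<open>\<open>g\<close> moves \<open>\<tau>\<close> as it moves the \<open>X\<close>-part of \<open>ext k t \<tau>\<close>\<close>
  then have "act_asgX n g \<tau> = act_asgX n g2 \<tau>1"
    using act_asgX_eq_act_asg_ext[OF adm(3), of \<tau> t] by (simp add: ext_def)
  then show "\<exists>g\<in>G. ext k w (act_asgX n g \<tau>) = act_asg (Vs n k) g (ext k t \<tau>)"
    using \<open>g \<in> G\<close> g_ext by metis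
qed

lemma finite_assignX: "finite (assignX n)"
proof (rule finite_subset)
  show "assignX n \<subseteq> (\<lambda>A i. i \<in> A) ` Pow {1..n}"
  proof
    fix \<tau> assume "\<tau> \<in> assignX n"
    then have "\<tau> = (\<lambda>i. i \<in> {i. \<tau> i})" "{i. \<tau> i} \<in> Pow {1..n}"
      by (auto simp: assignX_def)
    then show "\<tau> \<in> (\<lambda>A i. i \<in> A) ` Pow {1..n}" by blast
  qed
qed simp

lemma finite_interps:
  assumes "prefix n k D"
  shows "finite (interps k D)"
proof -
  let ?r = "\<lambda>s. \<lambda>j\<in>{1..k}. \<lambda>\<tau>\<in>assignX n. s j \<tau>"
  have "inj_on ?r (interps k D)"
  proof (rule inj_onI, intro ext)
    fix s t j \<tau>
    assume s: "s \<in> interps k D" and t: "t \<in> interps k D" and eq: "?r s = ?r t"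
    show "s j \<tau> = t j \<tau>"
    proof (cases "j \<in> {1..k}")
      case True
      define \<tau>0 where "\<tau>0 i = (i \<in> {1..n} \<and> \<tau> i)" for i
      have "\<tau>0 \<in> assignX n" by (auto simp: \<tau>0_def assignX_def)
      have "agree (D j) \<tau> \<tau>0"
        using assms True unfolding agree_def prefix_def \<tau>0_def by blast
      then have "s j \<tau> = s j \<tau>0" "t j \<tau> = t j \<tau>0"
        using s t True by (auto simp: interps_def)
      moreover have "s j \<tau>0 = t j \<tau>0"
        using fun_cong[OF fun_cong[OF eq, of j], of \<tau>0] True \<open>\<tau>0 \<in> assignX n\<close> by simp
      ultimately show ?thesis by simp
    next
      case False
      then show ?thesis using s t by (auto simp: interps_def)
    qed
  qed
  moreover have "?r ` interps k D \<subseteq> PiE {1..k} (\<lambda>_. PiE (assignX n) (\<lambda>_. UNIV))"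
    by auto
  moreover have "finite (PiE {1..k} (\<lambda>_. PiE (assignX n) (\<lambda>_. UNIV :: bool set)))"
    by (intro finite_PiE finite_assignX) auto
  ultimately show ?thesis by (meson finite_imageD finite_subset)
qed

lemma bij_betw_funpow_return:
  assumes "finite S" "bij_betw f S S" "x \<in> S"
  obtains m where "m > 0" "(f ^^ m) x = x"
proof -
  \<comment> \<open>\<open>funpow_inj_finite\<close> needs a map that is injective on the whole type\<close>
  define p where "p y = (if y \<in> S then f y else y)" for y
  have "inj p"
    using assms(2) unfolding p_def inj_def bij_betw_def inj_on_def by (metis image_eqI)
  have orbit: "(f ^^ m) x \<in> S" "(p ^^ m) x = (f ^^ m) x" for m
    by (induction m) (use assms(2,3) in \<open>auto simp: p_def bij_betw_def\<close>)
  have "{y. \<exists>m. y = (p ^^ m) x} \<subseteq> S" using orbit by auto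
  then obtain m where "m > 0" "(p ^^ m) x = x"
    using funpow_inj_finite[OF \<open>inj p\<close>] assms(1) finite_subset by blast
  then show thesis using that orbit(2) by simp
qed

lemma sem_related_assoc_group_back:
  assumes G: "admissible_group n k D G" and "prefix n k D"
    and f: "f \<in> assoc_group n k D G" and s: "s \<in> interps k D"
  shows "sem_related n k G (f s) s"
proof -
  have bij: "bij_betw f (interps k D) (interps k D)"
    using f by (simp add: assoc_group_def Bij_def)
  have orbit: "(f ^^ m) s \<in> interps k D" for m
    using bij_betw_funpow[OF bij] s by (auto simp: bij_betw_def)
  have chain: "sem_related n k G (f s) ((f ^^ Suc m) s)" for m
  proof (induction m)
    case 0
    then show ?case using sem_related_refl[OF G] by simp
  next
    case (Suc m)
    have "sem_related n k G ((f ^^ Suc m) s) (f ((f ^^ Suc m) s))"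
      using f orbit[of "Suc m"] unfolding assoc_group_iff by blast
    then show ?case using sem_related_trans[OF G Suc] by simp
  qed
  obtain m where "m > 0" "(f ^^ m) s = s"
    using bij_betw_funpow_return[OF finite_interps[OF \<open>prefix n k D\<close>] bij s] .
  then show ?thesis using chain[of "m - 1"] by simp
qed

lemma swap_in_assoc_group:
  assumes G: "admissible_group n k D G"
    and s: "s \<in> interps k D" and s': "s' \<in> interps k D"
    and "sem_related n k G s s'" "sem_related n k G s' s"
  shows "\<exists>h\<in>assoc_group n k D G. h s = s'"
proof -
  define h where "h = (\<lambda>t\<in>interps k D. if t = s then s' else if t = s' then s else t)"
  have hS: "h ` interps k D \<subseteq> interps k D" and hh: "\<forall>t\<in>interps k D. h (h t) = t"
    using s s' by (auto simp: h_def)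
  have "bij_betw h (interps k D) (interps k D)"
    by (rule bij_betw_byWitness[OF hh hh hS hS])
  then have "h \<in> Bij (interps k D)" by (simp add: Bij_def h_def)
  moreover have "sem_related n k G t (h t)" if "t \<in> interps k D" for t
  proof -
    consider "t = s" | "t = s'" | "t \<noteq> s" "t \<noteq> s'" by blast
    then show ?thesis
      using assms(4,5) sem_related_refl[OF G] that by cases (simp_all add: h_def)
  qed
  ultimately have "h \<in> assoc_group n k D G" by (simp add: assoc_group_iff)
  moreover have "h s = s'" using s by (simp add: h_def)
  ultimately show ?thesis by blast
qed

text \<open>Only the \<open>y\<^sub>j\<close> with \<open>E \<subseteq> D j\<close> can tell whether an assignment agrees with \<open>\<sigma>\<close>
  on \<open>E\<close>; restricting the splice to them keeps it in \<open>S(P)\<close>.\<close>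

definition splice :: "(nat \<Rightarrow> nat set) \<Rightarrow> nat set \<Rightarrow> (nat \<Rightarrow> bool) \<Rightarrow> interp \<Rightarrow> interp \<Rightarrow> interp" where
  "splice D E \<sigma> s t = (\<lambda>j \<tau>. if E \<subseteq> D j \<and> agree E \<tau> \<sigma> then t j \<tau> else s j \<tau>)"

lemma splice_in_interps:
  assumes s: "s \<in> interps k D" and t: "t \<in> interps k D"
  shows "splice D E \<sigma> s t \<in> interps k D"
  unfolding interps_def
proof (intro CollectI allI conjI impI)
  fix j a b assume j: "j \<in> {1..k}" and ab: "agree (D j) a b"
  then have "s j a = s j b" "t j a = t j b" using s t by (auto simp: interps_def)
  moreover have "E \<subseteq> D j \<Longrightarrow> agree E a \<sigma> = agree E b \<sigma>"
    using ab unfolding agree_def by auto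
  ultimately show "splice D E \<sigma> s t j a = splice D E \<sigma> s t j b"
    unfolding splice_def by (cases "E \<subseteq> D j") simp_all
next
  fix j :: nat assume "j \<notin> {1..k}"
  then have "s j = (\<lambda>_. False)" "t j = (\<lambda>_. False)"
    using s t unfolding interps_def by blast+
  then show "splice D E \<sigma> s t j = (\<lambda>_. False)"
    by (simp add: splice_def fun_eq_iff)
qed

lemma ext_splice_agree:
  assumes "agree E \<tau> \<sigma>" and "\<forall>j\<in>{1..k}. \<not> E \<subseteq> D j \<longrightarrow> s j \<tau> = t j \<tau>"
  shows "ext k (splice D E \<sigma> s t) \<tau> = ext k t \<tau>"
  using assms by (auto simp: ext_def splice_def split: var.split)

lemma ext_splice_disagree:
  "\<not> agree E \<tau> \<sigma> \<Longrightarrow> ext k (splice D E \<sigma> s t) \<tau> = ext k s \<tau>"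
  by (auto simp: ext_def splice_def split: var.split)

lemma sem_related_splice:
  assumes G: "admissible_group n k D G" and st: "sem_related n k G s t"
    and block: "\<forall>g\<in>G. \<forall>\<tau>\<in>assignX n. agree E \<tau> \<sigma> \<longrightarrow> agree E (act_asgX n g \<tau>) \<tau>"
    and coincide: "\<forall>\<tau>\<in>assignX n. agree E \<tau> \<sigma> \<longrightarrow> (\<forall>j\<in>{1..k}. \<not> E \<subseteq> D j \<longrightarrow> s j \<tau> = t j \<tau>)"
  shows "sem_related n k G s (splice D E \<sigma> s t)"
  unfolding sem_related_def
proof
  fix \<tau> assume \<tau>: "\<tau> \<in> assignX n"
  show "\<exists>g\<in>G. ext k (splice D E \<sigma> s t) (act_asgX n g \<tau>) = act_asg (Vs n k) g (ext k s \<tau>)"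
  proof (cases "agree E \<tau> \<sigma>")
    case True
    obtain g where g: "g \<in> G" "ext k t (act_asgX n g \<tau>) = act_asg (Vs n k) g (ext k s \<tau>)"
      using st \<tau> unfolding sem_related_def by blast
    have "agree E (act_asgX n g \<tau>) \<sigma>"
      using block g(1) \<tau> True by (simp add: agree_def)
    then have "ext k (splice D E \<sigma> s t) (act_asgX n g \<tau>) = ext k t (act_asgX n g \<tau>)"
      using coincide act_asgX_in_assignX by (blast intro: ext_splice_agree)
    then show ?thesis using g by metis
  next
    case False
    then show ?thesis using related_at_by_id[OF G \<tau>] ext_splice_disagree by metis
  qed
qed

lemma sem_related_splice_back:
  assumes G: "admissible_group n k D G" and ts: "sem_related n k G t s"
    and coincide: "\<forall>\<tau>\<in>assignX n. agree E \<tau> \<sigma> \<longrightarrow> (\<forall>j\<in>{1..k}. \<not> E \<subseteq> D j \<longrightarrow> s j \<tau> = t j \<tau>)"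
  shows "sem_related n k G (splice D E \<sigma> s t) s"
  unfolding sem_related_def
proof
  fix \<tau> assume \<tau>: "\<tau> \<in> assignX n"
  show "\<exists>g\<in>G. ext k s (act_asgX n g \<tau>) = act_asg (Vs n k) g (ext k (splice D E \<sigma> s t) \<tau>)"
  proof (cases "agree E \<tau> \<sigma>")
    case True
    then have "ext k (splice D E \<sigma> s t) \<tau> = ext k t \<tau>"
      using coincide \<tau> by (blast intro: ext_splice_agree)
    then show ?thesis using ts \<tau> unfolding sem_related_def by metis
  next
    case False
    then show ?thesis using related_at_by_id[OF G \<tau>] ext_splice_disagree by metis
  qed
qed

theorem lemma6:
  fixes n k :: nat and D :: "nat \<Rightarrow> nat set"
    and G :: "(form \<Rightarrow> form) set"
    and \<sigma> :: "nat \<Rightarrow> bool"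
    and f :: "(nat \<Rightarrow> (nat \<Rightarrow> bool) \<Rightarrow> bool) \<Rightarrow> (nat \<Rightarrow> (nat \<Rightarrow> bool) \<Rightarrow> bool)"
    and s :: "nat \<Rightarrow> (nat \<Rightarrow> bool) \<Rightarrow> bool"
    and i :: nat
  assumes "prefix n k D"
    and "admissible_group n k D G"
    and "\<sigma> \<in> assignX n"
    and "f \<in> assoc_group n k D G"
    and "s \<in> interps k D"
    and "i \<in> {1..k}"
    and h1: "\<forall>j\<in>{1..k}. (j < i \<or> \<not> D i \<subseteq> D j) \<longrightarrow>
              (\<forall>\<tau>\<in>assignX n. agree (D i) \<tau> \<sigma> \<longrightarrow> ext k s \<tau> (YV j) = ext k (f s) \<tau> (YV j))"
    and h2: "\<forall>g\<in>G. \<forall>\<tau>\<in>assignX n. agree (D i) \<tau> \<sigma> \<longrightarrow> agree (D i) (act_asgX n g \<tau>) \<tau>"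
  shows "\<exists>s'\<in>interps k D.
           (\<forall>j\<in>{1..k}. \<forall>\<tau>\<in>assignX n.
              ((j < i \<or> (j \<ge> i \<and> \<not> agree (D i) \<tau> \<sigma>)) \<longrightarrow> ext k s' \<tau> (YV j) = ext k s \<tau> (YV j))
            \<and> ((j \<ge> i \<and> agree (D i) \<tau> \<sigma>) \<longrightarrow> ext k s' \<tau> (YV j) = ext k (f s) \<tau> (YV j)))
         \<and> (\<exists>h\<in>assoc_group n k D G. h s = s')"
proof -
  note G = \<open>admissible_group n k D G\<close> and f = \<open>f \<in> assoc_group n k D G\<close>
    and s = \<open>s \<in> interps k D\<close>
  define s' where "s' = splice D (D i) \<sigma> s (f s)"
  have fs: "f s \<in> interps k D"
    using f s by (auto simp: assoc_group_def Bij_def bij_betw_def)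
  have coincide: "\<forall>\<tau>\<in>assignX n. agree (D i) \<tau> \<sigma> \<longrightarrow>
                    (\<forall>j\<in>{1..k}. \<not> D i \<subseteq> D j \<longrightarrow> s j \<tau> = f s j \<tau>)"
    using h1 by (simp add: ext_def)
  have "sem_related n k G s (f s)" using f s by (simp add: assoc_group_iff)
  then have "sem_related n k G s s'" "sem_related n k G s' s"
    using sem_related_splice[OF G _ h2 coincide] sem_related_splice_back[OF G _ coincide]
      sem_related_assoc_group_back[OF G \<open>prefix n k D\<close> f s]
    by (simp_all add: s'_def)
  moreover have "s' \<in> interps k D" using s fs by (simp add: s'_def splice_in_interps)
  ultimately obtain h where "h \<in> assoc_group n k D G" "h s = s'"
    using swap_in_assoc_group[OF G s] by blast
  moreover have "ext k s' \<tau> = (if agree (D i) \<tau> \<sigma> then ext k (f s) \<tau> else ext k s \<tau>)"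
    if "\<tau> \<in> assignX n" for \<tau>
    using that coincide ext_splice_agree ext_splice_disagree by (simp add: s'_def)
  ultimately show ?thesis
    using \<open>s' \<in> interps k D\<close> h1 by (metis (no_types, lifting) not_le)
qed

end
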